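(* Let $p,q,p',q'\in(0,1/2)$ and suppose $K_{pq}$ and $K_{p'q'}$ are twofold Cantor sets, with generating systems $\{S_1,S_2,S_3,S_4\}$ and $\{S_1',S_2',S_3',S_4'\}$ respectively. Then: (i) there is a homeomorphism $f:K_{pq}\to K_{p'q'}$ realising an isomorphism of the self-similar structures, i.e. $f(S_i(x))=S_i'(f(x))$ for all $x\in K_{pq}$ and all $i\in\{1,2,3,4\}$; (ii) if $(p,q)\neq(p',q')$, then such a homeomorphism $f$ cannot be extended to a homeomorphism of $[0,1]$ onto itself.
   Context: For $p,q\in(0,1/2)$ let $S_1(x)=px$, $S_2(x)=qx$, $S_3(x)=px+1-p$, $S_4(x)=qx+1-q$, let $K_{pq}$ be the attractor of $\{S_1,S_2,S_3,S_4\}$ (the unique nonempty compact $K\subset\mathbb R$ with $K=\bigcup_{i=1}^4S_i(K)$), and let $A=S_3(K_{pq})\cup S_4(K_{pq})$. $K_{pq}$ is called a twofold Cantor set if $S_1^m(A)\cap S_2^n(A)=\varnothing$ for all $m,n\in\mathbb N$. The maps $S_i'$ are defined in the same way with $p',q'$ in place of $p,q$. *)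

theory Defs
  imports "HOL-Analysis.Analysis"
begin

definition Smap :: "real \<Rightarrow> real \<Rightarrow> nat \<Rightarrow> real \<Rightarrow> real" where
  "Smap p q i x =
     (if i = 1 then p * x
      else if i = 2 then q * x
      else if i = 3 then p * x + 1 - p
      else q * x + 1 - q)"

definition Kpq :: "real \<Rightarrow> real \<Rightarrow> real set" where
  "Kpq p q = (THE K. K \<noteq> {} \<and> compact K \<and> K = (\<Union>i\<in>{1..4}. Smap p q i ` K))"

definition Apq :: "real \<Rightarrow> real \<Rightarrow> real set" where
  "Apq p q = Smap p q 3 ` Kpq p q \<union> Smap p q 4 ` Kpq p q"

definition twofold :: "real \<Rightarrow> real \<Rightarrow> bool" where
  "twofold p q \<longleftrightarrow>
     (\<forall>m n. m \<ge> 1 \<longrightarrow> n \<ge> 1 \<longrightarrow>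
        ((Smap p q 1) ^^ m) ` Apq p q \<inter> ((Smap p q 2) ^^ n) ` Apq p q = {})"

end

theory Submission
  imports Defs
begin

text \<open>The coupled system (x, y) \<mapsto> (S_i x, S'_i y) on the plane has an attractor G whose
  projections are K_pq and K_p'q'. By the twofold condition every nonzero point of K_pq is
  p^a q^b z with unique exponents and z \<in> A; together with the symmetry x \<mapsto> 1 - x this makes
  the fibres of G shrink by the factor max p' q' under the rescalings, so G is the graph of a
  homeomorphism f, which conjugates the two systems.

  A homeomorphism of [0, 1] extending f fixes 0, hence increases, so f preserves the order
  among the points p^a q^b and (1 - p) p^a q^b. In logarithmic coordinates, where the twofold
  condition makes ln p / ln q irrational, this forces (p', q') = (p, q).\<close>

definition attractor :: "('i \<Rightarrow> 'a::heine_borel \<Rightarrow> 'a) \<Rightarrow> 'i set \<Rightarrow> 'a set" where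
  "attractor T I = (THE K. K \<noteq> {} \<and> compact K \<and> K = (\<Union>i\<in>I. T i ` K))"

inductive_set ifs_orbit :: "('i \<Rightarrow> 'a \<Rightarrow> 'a) \<Rightarrow> 'i set \<Rightarrow> 'a \<Rightarrow> 'a set" for T I x0 where
  start: "x0 \<in> ifs_orbit T I x0"
| step: "i \<in> I \<Longrightarrow> x \<in> ifs_orbit T I x0 \<Longrightarrow> T i x \<in> ifs_orbit T I x0"

lemma nonpos_if_le_geometric:
  fixes x B c :: real
  assumes "c < 1" and le: "\<And>n. x \<le> c ^ n * B"
  shows "x \<le> 0"
proof (rule ccontr)
  assume "\<not> x \<le> 0"
  then have "0 < x" "0 < B" using le[of 0] by auto
  then obtain n where "c ^ n < x / B" using real_arch_pow_inv \<open>c < 1\<close> by fastforce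
  with le[of n] \<open>0 < B\<close> show False by (simp add: field_simps)
qed

locale contracting_ifs =
  fixes T :: "'i \<Rightarrow> 'a::heine_borel \<Rightarrow> 'a" and I :: "'i set" and c :: real
  assumes finite_index: "finite I" and index_nonempty: "I \<noteq> {}"
    and factor_nonneg: "0 \<le> c" and factor_less_1: "c < 1"
    and contraction: "\<And>i x y. i \<in> I \<Longrightarrow> dist (T i x) (T i y) \<le> c * dist x y"
begin

lemma continuous_on_map: "i \<in> I \<Longrightarrow> continuous_on S (T i)"
  by (intro lipschitz_on_continuous_on[of c] lipschitz_onI contraction factor_nonneg)

lemma infdist_map_le:
  assumes "i \<in> I" "closed C" "C \<noteq> {}" "T i ` C \<subseteq> C"
  shows "infdist (T i x) C \<le> c * infdist x C"
proof -
  obtain y where y: "y \<in> C" "infdist x C = dist x y"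
    using infdist_attains_inf[OF assms(2,3)] by metis
  have "infdist (T i x) C \<le> dist (T i x) (T i y)"
    using y assms(4) by (intro infdist_le) blast
  also have "\<dots> \<le> c * dist x y" using contraction[OF assms(1)] .
  finally show ?thesis using y by simp
qed

lemma self_similar_subset_invariant:
  assumes K: "compact K" "K = (\<Union>i\<in>I. T i ` K)"
    and C: "closed C" "C \<noteq> {}" "\<And>i. i \<in> I \<Longrightarrow> T i ` C \<subseteq> C"
  shows "K \<subseteq> C"
proof
  fix x assume "x \<in> K"
  have "bounded ((\<lambda>y. infdist y C) ` K)"
    by (intro compact_imp_bounded compact_continuous_image continuous_on_infdist
        continuous_on_id K(1))
  then obtain B where "\<forall>z\<in>(\<lambda>y. infdist y C) ` K. \<bar>z\<bar> \<le> B"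
    unfolding bounded_real by blast
  then have B: "\<forall>y\<in>K. infdist y C \<le> B" by (auto simp: abs_le_iff)
  have "\<forall>y\<in>K. infdist y C \<le> c ^ n * B" for n
  proof (induction n)
    case (Suc n)
    show ?case
    proof
      fix y assume "y \<in> K"
      then obtain i u where "i \<in> I" "u \<in> K" "y = T i u" using K(2) by blast
      then have "infdist y C \<le> c * infdist u C" using infdist_map_le C by blast
      also have "\<dots> \<le> c * (c ^ n * B)"
        using Suc \<open>u \<in> K\<close> factor_nonneg by (intro mult_left_mono) auto
      finally show "infdist y C \<le> c ^ Suc n * B" by simp
    qed
  qed (use B in simp)
  then have "infdist x C \<le> 0"
    using \<open>x \<in> K\<close> factor_less_1 by (intro nonpos_if_le_geometric) auto
  then have "infdist x C = 0" using infdist_nonneg[of x C] by linarith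
  then show "x \<in> C" using in_closed_iff_infdist_zero[OF C(1,2)] by blast
qed

lemma self_similar_unique:
  assumes "compact K" "K \<noteq> {}" "K = (\<Union>i\<in>I. T i ` K)"
    and "compact L" "L \<noteq> {}" "L = (\<Union>i\<in>I. T i ` L)"
  shows "K = L"
proof -
  have "T i ` M \<subseteq> M" if "i \<in> I" "M = (\<Union>i\<in>I. T i ` M)" for i M
    using that by blast
  then show ?thesis using assms compact_imp_closed
    by (metis self_similar_subset_invariant subset_antisym)
qed

lemma fixpoint_mem_self_similar:
  assumes "compact K" "K \<noteq> {}" "K = (\<Union>i\<in>I. T i ` K)" and "i \<in> I" "T i x = x"
  shows "x \<in> K"
proof -
  have "infdist x K \<le> c * infdist x K"
    using infdist_map_le[of i K x] assms compact_imp_closed by (metis UN_upper)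
  then have "infdist x K = 0"
    using infdist_nonneg[of x K] factor_less_1 by (smt (verit) mult_le_cancel_right1)
  then show ?thesis using in_closed_iff_infdist_zero compact_imp_closed assms(1,2) by blast
qed

lemma cball_invariant:
  obtains R where "0 \<le> R" "\<And>i. i \<in> I \<Longrightarrow> T i ` cball x0 R \<subseteq> cball x0 R"
proof
  define R where "R = (\<Sum>i\<in>I. dist (T i x0) x0) / (1 - c)"
  show "0 \<le> R" unfolding R_def using factor_less_1 by (simp add: sum_nonneg)
  fix i assume "i \<in> I"
  have R: "dist (T i x0) x0 \<le> (1 - c) * R"
    using member_le_sum[OF \<open>i \<in> I\<close>, of "\<lambda>i. dist (T i x0) x0"] finite_index factor_less_1
    by (simp add: R_def)
  show "T i ` cball x0 R \<subseteq> cball x0 R"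
  proof
    fix y assume "y \<in> T i ` cball x0 R"
    then obtain x where x: "dist x0 x \<le> R" "y = T i x" by auto
    have "dist x0 y \<le> dist (T i x) (T i x0) + dist (T i x0) x0"
      using x(2) by (metis dist_commute dist_triangle)
    also have "\<dots> \<le> c * R + (1 - c) * R"
      using contraction[OF \<open>i \<in> I\<close>, of x x0] R x(1) factor_nonneg
      by (smt (verit) dist_commute mult_left_mono)
    finally show "y \<in> cball x0 R" by (simp add: algebra_simps)
  qed
qed

lemma closure_orbit_self_similar:
  assumes "i0 \<in> I" "T i0 x0 = x0" and bounded: "bounded (ifs_orbit T I x0)"
  defines "K \<equiv> closure (ifs_orbit T I x0)"
  shows "compact K" "K \<noteq> {}" "K = (\<Union>i\<in>I. T i ` K)"
proof -
  let ?P = "ifs_orbit T I x0"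
  have P_equation: "?P = (\<Union>i\<in>I. T i ` ?P)"
  proof
    show "?P \<subseteq> (\<Union>i\<in>I. T i ` ?P)"
    proof
      fix x assume "x \<in> ?P"
      then show "x \<in> (\<Union>i\<in>I. T i ` ?P)"
      proof cases
        case start
        then show ?thesis using assms(1,2) ifs_orbit.start by (metis UN_iff imageI)
      qed blast
    qed
  qed (auto intro: ifs_orbit.step)
  show "compact K" unfolding K_def using bounded by (rule compact_closure[THEN iffD2])
  show "K \<noteq> {}" unfolding K_def using ifs_orbit.start[of x0 T I] closure_subset by blast
  have maps_into: "T i ` K \<subseteq> K" if "i \<in> I" for i
    unfolding K_def using P_equation that closure_subset
    by (intro image_closure_subset continuous_on_map) blast+
  have "closed (\<Union>i\<in>I. T i ` K)"
    using finite_index \<open>compact K\<close>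
    by (intro closed_UN)
      (auto intro!: compact_imp_closed compact_continuous_image continuous_on_map)
  moreover have "?P \<subseteq> (\<Union>i\<in>I. T i ` K)"
    using P_equation closure_subset unfolding K_def by blast
  ultimately have "K \<subseteq> (\<Union>i\<in>I. T i ` K)" unfolding K_def by (rule closure_minimal[rotated])
  then show "K = (\<Union>i\<in>I. T i ` K)" using maps_into by blast
qed

lemma self_similar_exists: "\<exists>K. compact K \<and> K \<noteq> {} \<and> K = (\<Union>i\<in>I. T i ` K)"
proof -
  obtain i0 where "i0 \<in> I" using index_nonempty by blast
  obtain x0 where "T i0 x0 = x0"
    using banach_fix_type[OF factor_nonneg factor_less_1] contraction[OF \<open>i0 \<in> I\<close>] by metis
  obtain R where "0 \<le> R" and invariant: "\<And>i. i \<in> I \<Longrightarrow> T i ` cball x0 R \<subseteq> cball x0 R"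
    using cball_invariant[of x0] by blast
  have "ifs_orbit T I x0 \<subseteq> cball x0 R"
  proof
    fix x assume "x \<in> ifs_orbit T I x0" then show "x \<in> cball x0 R"
      by induction (use \<open>0 \<le> R\<close> invariant in \<open>auto simp: image_subset_iff\<close>)
  qed
  then have "bounded (ifs_orbit T I x0)" by (rule bounded_subset[OF bounded_cball])
  from closure_orbit_self_similar[OF \<open>i0 \<in> I\<close> \<open>T i0 x0 = x0\<close> this] show ?thesis by blast
qed

lemma attractor_eqI:
  assumes "compact K" "K \<noteq> {}" "K = (\<Union>i\<in>I. T i ` K)"
  shows "attractor T I = K"
  unfolding attractor_def
  using assms self_similar_unique by (intro the_equality) blast+

lemma attractor:
  "compact (attractor T I)" "attractor T I \<noteq> {}" "attractor T I = (\<Union>i\<in>I. T i ` attractor T I)"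
  using self_similar_exists attractor_eqI by metis+

lemma attractor_subset:
  "closed C \<Longrightarrow> C \<noteq> {} \<Longrightarrow> (\<And>i. i \<in> I \<Longrightarrow> T i ` C \<subseteq> C) \<Longrightarrow> attractor T I \<subseteq> C"
  using self_similar_subset_invariant attractor by blast

lemma fixpoint_mem_attractor: "i \<in> I \<Longrightarrow> T i x = x \<Longrightarrow> x \<in> attractor T I"
  using fixpoint_mem_self_similar attractor by blast

lemma map_mem_attractor: "i \<in> I \<Longrightarrow> x \<in> attractor T I \<Longrightarrow> T i x \<in> attractor T I"
  using attractor(3) by blast

end

lemma attractor_conjugate:
  assumes "contracting_ifs T I c" "contracting_ifs T' I' c'"
    and "continuous_on UNIV \<phi>" "\<sigma> ` I = I'"
    and conj: "\<And>i x. i \<in> I \<Longrightarrow> \<phi> (T i x) = T' (\<sigma> i) (\<phi> x)"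
  shows "\<phi> ` attractor T I = attractor T' I'"
proof -
  interpret src: contracting_ifs T I c by fact
  interpret tgt: contracting_ifs T' I' c' by fact
  let ?K = "attractor T I"
  have "\<phi> ` ?K = (\<Union>i\<in>I. \<phi> ` T i ` ?K)" using src.attractor(3) by blast
  also have "\<dots> = (\<Union>i\<in>I. T' (\<sigma> i) ` \<phi> ` ?K)" by (simp add: image_image conj)
  also have "\<dots> = (\<Union>j\<in>I'. T' j ` \<phi> ` ?K)" using \<open>\<sigma> ` I = I'\<close> by auto
  finally show ?thesis
    using src.attractor(1,2) \<open>continuous_on UNIV \<phi>\<close>
    by (intro tgt.attractor_eqI[symmetric])
      (auto intro: compact_continuous_image continuous_on_subset)
qed

lemma contracting_ifs_prod:
  fixes T :: "'i \<Rightarrow> 'a::heine_borel \<Rightarrow> 'a" and T' :: "'i \<Rightarrow> 'b::heine_borel \<Rightarrow> 'b"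
  assumes "contracting_ifs T I c" "contracting_ifs T' I c'"
  shows "contracting_ifs (\<lambda>i. map_prod (T i) (T' i)) I (max c c')"
proof -
  interpret src: contracting_ifs T I c by fact
  interpret tgt: contracting_ifs T' I c' by fact
  show ?thesis
  proof
    fix i and x y :: "'a \<times> 'b" assume "i \<in> I"
    let ?d = "max c c'"
    obtain a b a' b' where xy: "x = (a, b)" "y = (a', b')" by fastforce
    have "dist (T i a) (T i a') \<le> ?d * dist a a'" "dist (T' i b) (T' i b') \<le> ?d * dist b b'"
      using src.contraction[OF \<open>i \<in> I\<close>, of a a'] tgt.contraction[OF \<open>i \<in> I\<close>, of b b']
      by (smt (verit) max.cobounded1 max.cobounded2 mult_right_mono zero_le_dist)+
    then have "(dist (T i a) (T i a'))\<^sup>2 + (dist (T' i b) (T' i b'))\<^sup>2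
        \<le> (?d * dist a a')\<^sup>2 + (?d * dist b b')\<^sup>2"
      by (intro add_mono power_mono) auto
    then have "(dist (T i a) (T i a'))\<^sup>2 + (dist (T' i b) (T' i b'))\<^sup>2
        \<le> ?d\<^sup>2 * ((dist a a')\<^sup>2 + (dist b b')\<^sup>2)"
      by (simp add: power_mult_distrib distrib_left)
    then have "dist (map_prod (T i) (T' i) x) (map_prod (T i) (T' i) y)
        \<le> sqrt (?d\<^sup>2 * (dist x y)\<^sup>2)"
      unfolding xy by (simp add: dist_Pair_Pair)
    then show "dist (map_prod (T i) (T' i) x) (map_prod (T i) (T' i) y) \<le> ?d * dist x y"
      using src.factor_nonneg by (simp add: real_sqrt_mult)
  qed (use src.finite_index src.index_nonempty src.factor_nonneg src.factor_less_1 tgt.factor_less_1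
      in auto)
qed

lemma compact_graph_homeomorphism:
  fixes G :: "('a::euclidean_space \<times> 'b::euclidean_space) set"
  assumes "compact G"
    and right_unique: "\<And>x y y'. (x, y) \<in> G \<Longrightarrow> (x, y') \<in> G \<Longrightarrow> y = y'"
    and left_unique: "\<And>x x' y. (x, y) \<in> G \<Longrightarrow> (x', y) \<in> G \<Longrightarrow> x = x'"
  obtains f g where "homeomorphism (fst ` G) (snd ` G) f g" "\<And>x y. (x, y) \<in> G \<Longrightarrow> f x = y"
proof -
  define f where "f x = (THE y. (x, y) \<in> G)" for x
  have f_eq: "f x = y" if "(x, y) \<in> G" for x y
    unfolding f_def by (rule the_equality) (use that right_unique in blast)+
  have f_fst: "f (fst z) = snd z" if "z \<in> G" for z
    using f_eq[of "fst z" "snd z"] that by simp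
  have graph: "(\<lambda>x. (x, f x)) ` fst ` G = G"
    unfolding image_image using f_fst by (simp cong: image_cong)
  have image: "f ` fst ` G = snd ` G"
    unfolding image_image using f_fst by (simp cong: image_cong)
  have "compact (fst ` G)"
    by (rule compact_continuous_image[OF continuous_on_fst[OF continuous_on_id] assms(1)])
  moreover have "continuous_on (fst ` G) f"
  proof (rule continuous_from_closed_graph)
    show "compact (snd ` G)"
      by (rule compact_continuous_image[OF continuous_on_snd[OF continuous_on_id] assms(1)])
    show "f \<in> fst ` G \<rightarrow> snd ` G" unfolding image_subset_iff_funcset[symmetric] image ..
    show "closed ((\<lambda>x. (x, f x)) ` fst ` G)"
      unfolding graph using assms(1) by (rule compact_imp_closed)
  qed
  moreover have "inj_on f (fst ` G)"
  proof (rule inj_onI)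
    fix x x' assume "x \<in> fst ` G" "x' \<in> fst ` G" and eq: "f x = f x'"
    then obtain y y' where "(x, y) \<in> G" "(x', y') \<in> G" unfolding fst_eq_Domain by blast
    with eq show "x = x'" using f_eq left_unique by metis
  qed
  ultimately obtain g where "homeomorphism (fst ` G) (snd ` G) f g"
    using homeomorphism_compact image by metis
  then show thesis using that f_eq by blast
qed

lemma dense_int_combination:
  fixes l u v w :: real
  assumes "u \<noteq> 0" "l / u \<notin> \<rat>" "v < w"
  obtains m n :: int where "v < of_int m * l + of_int n * u" "of_int m * l + of_int n * u < w"
proof -
  define \<epsilon> where "\<epsilon> = (w - v) / (2 * \<bar>u\<bar>)"
  have "0 < \<epsilon>" using assms(1,3) by (simp add: \<epsilon>_def)
  then obtain h k :: int where hk: "\<bar>of_int k * (l / u) - of_int h - (v + w) / (2 * u)\<bar> < \<epsilon>"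
    using sequence_of_fractional_parts_is_dense[OF assms(2)] by metis
  define X where "X = of_int k * l + of_int (- h) * u"
  have "X - (v + w) / 2 = u * (of_int k * (l / u) - of_int h - (v + w) / (2 * u))"
    unfolding X_def using assms(1) by (simp add: field_simps)
  then have "\<bar>X - (v + w) / 2\<bar> < \<bar>u\<bar> * \<epsilon>"
    using hk assms(1) by (simp add: abs_mult)
  also have "\<bar>u\<bar> * \<epsilon> = (w - v) / 2" using assms(1) by (simp add: \<epsilon>_def)
  finally have "v < X \<and> X < w" unfolding abs_less_iff by (simp add: field_simps)
  then show thesis unfolding X_def using that by blast
qed

lemma irrational_ratio_if_independent:
  fixes l u :: real
  assumes "u \<noteq> 0" and indep: "\<And>m n :: int. of_int m * l + of_int n * u = 0 \<Longrightarrow> m = 0"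
  shows "l / u \<notin> \<rat>"
proof
  assume "l / u \<in> \<rat>"
  then obtain i :: int and k :: nat where "l / u = of_int i / real k" "k \<noteq> 0"
    unfolding Rats_eq_int_div_nat by blast
  then have "of_int (int k) * l + of_int (- i) * u = 0" using assms(1) by (simp add: field_simps)
  then show False using indep \<open>k \<noteq> 0\<close> by fastforce
qed

lemma ratio_eq_if_sign_preserving:
  fixes l u l' u' :: real
  assumes "u < 0" "u' < 0"
    and sign: "\<And>m n :: int. of_int m * l + of_int n * u < 0 \<Longrightarrow> of_int m * l' + of_int n * u' < 0"
  shows "l' / u' = l / u"
proof -
  have transfer: "r < l / u \<longrightarrow> r < l' / u'" "l / u < r \<longrightarrow> l' / u' < r" if "r \<in> \<rat>" for r
  proof -
    obtain i :: int and k :: nat where r: "r = of_int i / real k" "k \<noteq> 0"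
      using \<open>r \<in> \<rat>\<close> unfolding Rats_eq_int_div_nat by blast
    have left: "of_int (int k) * a + of_int (- i) * b < 0 \<longleftrightarrow> r < a / b"
      and right: "of_int (- int k) * a + of_int i * b < 0 \<longleftrightarrow> a / b < r" if "b < 0" for a b
      using that r(2) unfolding r(1) by (simp_all add: field_simps)
    show "r < l / u \<longrightarrow> r < l' / u'" "l / u < r \<longrightarrow> l' / u' < r"
      using sign[of "int k" "- i"] sign[of "- int k" i] left right assms(1,2) by blast+
  qed
  show ?thesis
  proof (rule ccontr)
    assume "l' / u' \<noteq> l / u"
    then consider "l' / u' < l / u" | "l / u < l' / u'" by linarith
    then show False
    proof cases
      case 1
      then obtain r where "r \<in> \<rat>" "l' / u' < r" "r < l / u" using Rats_dense_in_real by blast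
      then show False using transfer by fastforce
    next
      case 2
      then obtain r where "r \<in> \<rat>" "l / u < r" "r < l' / u'" using Rats_dense_in_real by blast
      then show False using transfer by fastforce
    qed
  qed
qed

lemma cut_eq_if_order_preserving:
  fixes l u \<alpha> \<alpha>' t :: real
  assumes "u \<noteq> 0" "l / u \<notin> \<rat>" "0 < t"
    and below: "\<And>m n :: int. of_int m * l + of_int n * u < \<alpha>
                  \<Longrightarrow> t * (of_int m * l + of_int n * u) < \<alpha>'"
    and above: "\<And>m n :: int. \<alpha> < of_int m * l + of_int n * u
                  \<Longrightarrow> \<alpha>' < t * (of_int m * l + of_int n * u)"
  shows "\<alpha>' = t * \<alpha>"
proof (rule ccontr)
  assume "\<alpha>' \<noteq> t * \<alpha>"
  then consider "\<alpha> < \<alpha>' / t" | "\<alpha>' / t < \<alpha>" using \<open>0 < t\<close> by (fastforce simp: field_simps)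
  then show False
  proof cases
    case 1
    then obtain m n :: int
      where "\<alpha> < of_int m * l + of_int n * u" "of_int m * l + of_int n * u < \<alpha>' / t"
      using dense_int_combination[OF assms(1,2)] by blast
    then show False using above[of m n] \<open>0 < t\<close> by (simp add: field_simps)
  next
    case 2
    then obtain m n :: int
      where "\<alpha>' / t < of_int m * l + of_int n * u" "of_int m * l + of_int n * u < \<alpha>"
      using dense_int_combination[OF assms(1,2)] by blast
    then show False using below[of m n] \<open>0 < t\<close> by (simp add: field_simps)
  qed
qed

lemma scaled_exp_sum_eq_one:
  fixes x y t :: real
  assumes "x < 0" "y < 0" "0 < t" "exp x + exp y = 1" "exp (t * x) + exp (t * y) = 1"
  shows "t = 1"
proof (rule ccontr)
  assume "t \<noteq> 1"
  then consider "1 < t" | "t < 1" by linarith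
  then show False
  proof cases
    case 1
    then have "t * x < x" "t * y < y" using assms(1,2) by (simp_all add: mult_less_cancel_right1)
    then show False using assms(4,5) exp_less_mono by (smt (verit))
  next
    case 2
    then have "x < t * x" "y < t * y" using assms(1,2) by (simp_all add: mult_less_cancel_right2)
    then show False using assms(4,5) exp_less_mono by (smt (verit))
  qed
qed

lemma ln_int_combination:
  fixes x y :: real
  assumes "0 < x" "0 < y"
  shows "of_int m * ln x + of_int n * ln y
       = ln (x ^ nat m * y ^ nat n) - ln (x ^ nat (- m) * y ^ nat (- n))"
proof -
  have split: "real_of_int k = real (nat k) - real (nat (- k))" for k :: int by (cases "0 \<le> k") auto
  show ?thesis using assms by (simp add: ln_mult ln_realpow split[of m] split[of n] algebra_simps)
qed

lemma ln_int_combination_less: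
  fixes x y c :: real
  assumes "0 < x" "0 < y" "0 < c"
  shows "of_int m * ln x + of_int n * ln y < ln c
           \<longleftrightarrow> x ^ nat m * y ^ nat n < x ^ nat (- m) * y ^ nat (- n) * c"
    and "ln c < of_int m * ln x + of_int n * ln y
           \<longleftrightarrow> x ^ nat (- m) * y ^ nat (- n) * c < x ^ nat m * y ^ nat n"
proof -
  let ?A = "x ^ nat m * y ^ nat n" and ?B = "x ^ nat (- m) * y ^ nat (- n)"
  have pos: "0 < ?A" "0 < ?B * c" using assms by simp_all
  have "of_int m * ln x + of_int n * ln y - ln c = ln ?A - ln (?B * c)"
    using assms by (simp add: ln_int_combination ln_mult)
  then show "of_int m * ln x + of_int n * ln y < ln c \<longleftrightarrow> ?A < ?B * c"
    "ln c < of_int m * ln x + of_int n * ln y \<longleftrightarrow> ?B * c < ?A"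
    using ln_less_cancel_iff[OF pos] ln_less_cancel_iff[OF pos(2,1)] by linarith+
qed

text \<open>An order isomorphism between the sets of points p^a q^b and (1 - p) p^a q^b and the
  corresponding sets for p', q' pins down the parameters: in logarithmic coordinates it first
  forces ln p' / ln q' = ln p / ln q, then, the ratio being irrational, a common scaling factor t;
  finally p^t + (1 - p)^t = 1 forces t = 1.\<close>

lemma power_order_rigidity:
  fixes p q p' q' :: real
  assumes unit: "0 < p" "p < 1" "0 < q" "q < 1" "0 < p'" "p' < 1" "0 < q'" "q' < 1"
    and inj: "\<And>a b c d. p ^ a * q ^ b = p ^ c * q ^ d \<Longrightarrow> a = c"
    and mono: "\<And>a b c d. p ^ a * q ^ b < p ^ c * q ^ d \<Longrightarrow> p' ^ a * q' ^ b < p' ^ c * q' ^ d"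
    and mono_below: "\<And>a b c d. p ^ a * q ^ b < p ^ c * q ^ d * (1 - p)
                        \<Longrightarrow> p' ^ a * q' ^ b < p' ^ c * q' ^ d * (1 - p')"
    and mono_above: "\<And>a b c d. p ^ c * q ^ d * (1 - p) < p ^ a * q ^ b
                        \<Longrightarrow> p' ^ c * q' ^ d * (1 - p') < p' ^ a * q' ^ b"
  shows "p' = p \<and> q' = q"
proof -
  define l u l' u' where "l = ln p" and "u = ln q" and "l' = ln p'" and "u' = ln q'"
  define \<alpha> \<alpha>' where "\<alpha> = ln (1 - p)" and "\<alpha>' = ln (1 - p')"
  note defs = l_def u_def l'_def u'_def \<alpha>_def \<alpha>'_def
  have neg: "l < 0" "u < 0" "l' < 0" "u' < 0" "\<alpha> < 0"
    using unit by (simp_all add: defs)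
  note less = ln_int_combination_less[of p q, OF unit(1,3)]
    ln_int_combination_less[of p' q', OF unit(5,7)]
  have sign: "of_int m * l' + of_int n * u' < 0" if "of_int m * l + of_int n * u < 0" for m n :: int
    using that less(1)[of 1 m n] less(3)[of 1 m n] mono by (simp add: defs)
  have indep: "m = 0" if "of_int m * l + of_int n * u = 0" for m n :: int
  proof -
    have "p ^ nat m * q ^ nat n = p ^ nat (- m) * q ^ nat (- n)"
      using that unit by (simp add: defs ln_int_combination ln_mult flip: ln_inj_iff)
    then show ?thesis using inj by fastforce
  qed
  have ratio: "l' / u' = l / u" using ratio_eq_if_sign_preserving[OF neg(2,4) sign] .
  define t where "t = u' / u"
  have "0 < t" using neg by (simp add: t_def divide_neg_neg)
  have scaled: "l' = t * l" "u' = t * u" using ratio neg by (simp_all add: t_def field_simps)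
  have "\<alpha>' = t * \<alpha>"
  proof (rule cut_eq_if_order_preserving)
    show "u \<noteq> 0" "l / u \<notin> \<rat>" using neg irrational_ratio_if_independent[of u l] indep by auto
    show "t * (of_int m * l + of_int n * u) < \<alpha>'"
      if "of_int m * l + of_int n * u < \<alpha>" for m n :: int
      using that less(1)[of "1 - p" m n] less(3)[of "1 - p'" m n] mono_below unit scaled
      by (simp add: defs algebra_simps)
    show "\<alpha>' < t * (of_int m * l + of_int n * u)"
      if "\<alpha> < of_int m * l + of_int n * u" for m n :: int
      using that less(2)[of "1 - p" m n] less(4)[of "1 - p'" m n] mono_above unit scaled
      by (simp add: defs algebra_simps)
  qed fact
  then have "exp (t * l) + exp (t * \<alpha>) = exp l' + exp \<alpha>'" using scaled by simp
  also have "\<dots> = 1" using unit by (simp add: defs)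
  finally have "exp (t * l) + exp (t * \<alpha>) = 1" .
  moreover have "exp l + exp \<alpha> = 1" using unit by (simp add: defs)
  ultimately have "t = 1" using scaled_exp_sum_eq_one[OF neg(1,5) \<open>0 < t\<close>] by simp
  then show ?thesis using scaled unit by (simp add: defs)
qed

lemma homeomorphism_unit_interval_strict_mono:
  fixes h k :: "real \<Rightarrow> real"
  assumes hom: "homeomorphism {0..1} {0..1} h k" and "h 0 = 0" and xy: "0 \<le> x" "x < y" "y \<le> 1"
  shows "h x < h y"
proof -
  have cont: "continuous_on {0..1} h" and img: "h ` {0..1} = {0..1}"
    and inv: "\<And>z. z \<in> {0..1} \<Longrightarrow> k (h z) = z"
    using hom unfolding homeomorphism_def by auto
  have inj: "inj_on h {0..y}" using inv xy by (intro inj_on_inverseI[where g = k]) auto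
  have "h x \<in> {0..1}" "h y \<in> {0..1}" using img xy by auto
  moreover have "h y \<noteq> h 0" using inj_onD[OF inj, of y 0] xy by auto
  moreover have "h 0 < h x \<and> h x < h y \<or> h y < h x \<and> h x < h 0" if "0 < x"
    using continuous_inj_imp_mono[OF that xy(2) continuous_on_subset[OF cont] inj] xy by auto
  ultimately show ?thesis using \<open>h 0 = 0\<close> xy(1) by (cases "x = 0") auto
qed

lemma Smap_simps [simp]:
  "Smap p q 1 x = p * x" "Smap p q (Suc 0) x = p * x" "Smap p q 2 x = q * x"
  "Smap p q 3 x = p * x + 1 - p" "Smap p q 4 x = q * x + 1 - q"
  by (simp_all add: Smap_def)

lemma Smap_1_iterate: "(Smap p q 1 ^^ n) x = p ^ n * x"
  by (induction n) (auto simp: Smap_def)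

lemma Smap_2_iterate: "(Smap p q 2 ^^ n) x = q ^ n * x"
  by (induction n) (auto simp: Smap_def)

locale pq_ifs =
  fixes p q :: real
  assumes p_pos: "0 < p" and p_less: "p < 1/2" and q_pos: "0 < q" and q_less: "q < 1/2"
begin

lemma contracting: "contracting_ifs (Smap p q) {1..4} (max p q)"
proof
  fix i :: nat and x y :: real assume "i \<in> {1..4}"
  then have "dist (Smap p q i x) (Smap p q i y) = p * dist x y
      \<or> dist (Smap p q i x) (Smap p q i y) = q * dist x y"
    using p_pos q_pos unfolding Smap_def dist_real_def
    by (auto simp: abs_mult simp flip: right_diff_distrib)
  moreover have "p * dist x y \<le> max p q * dist x y" "q * dist x y \<le> max p q * dist x y"
    by (simp_all add: mult_right_mono)
  ultimately show "dist (Smap p q i x) (Smap p q i y) \<le> max p q * dist x y"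
    by linarith
qed (use p_pos p_less q_pos q_less in auto)

lemma Kpq_eq_attractor: "Kpq p q = attractor (Smap p q) {1..4}"
  unfolding Kpq_def attractor_def ..

lemma Kpq_self_similar: "Kpq p q = (\<Union>i\<in>{1..4}. Smap p q i ` Kpq p q)"
  using contracting_ifs.attractor(3)[OF contracting] unfolding Kpq_eq_attractor .

lemma Smap_mem_Kpq: "i \<in> {1..4} \<Longrightarrow> x \<in> Kpq p q \<Longrightarrow> Smap p q i x \<in> Kpq p q"
  using Kpq_self_similar by blast

lemma zero_mem_Kpq: "0 \<in> Kpq p q"
  and one_mem_Kpq: "1 \<in> Kpq p q"
  using contracting_ifs.fixpoint_mem_attractor[OF contracting, of 1 0]
    contracting_ifs.fixpoint_mem_attractor[OF contracting, of 3 1]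
  unfolding Kpq_eq_attractor by simp_all

lemma Kpq_subset_unit: "Kpq p q \<subseteq> {0..1}"
proof -
  have "Smap p q i x \<in> {0..1}" if "x \<in> {0..1}" for i x
  proof -
    have "0 \<le> p * x" "p * x \<le> p" "0 \<le> q * x" "q * x \<le> q"
      using that p_pos q_pos by (simp_all add: mult_left_le)
    moreover have "Smap p q i x = p * x \<or> Smap p q i x = q * x
        \<or> Smap p q i x = p * x + 1 - p \<or> Smap p q i x = q * x + 1 - q"
      by (simp add: Smap_def)
    ultimately show ?thesis
      using that p_pos p_less q_pos q_less unfolding atLeastAtMost_iff
      by (elim disjE; intro conjI; linarith)
  qed
  then show ?thesis
    unfolding Kpq_eq_attractor by (intro contracting_ifs.attractor_subset[OF contracting]) auto
qed

lemma scaled_mem_Kpq: "x \<in> Kpq p q \<Longrightarrow> p ^ a * q ^ b * x \<in> Kpq p q"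
proof (induction a)
  case 0
  then show ?case by (induction b) (use Smap_mem_Kpq[of 2] in \<open>auto simp: mult.assoc\<close>)
next
  case (Suc a)
  then show ?case using Smap_mem_Kpq[of 1 "p ^ a * q ^ b * x"] by (simp add: mult.assoc)
qed

lemma max_less_half: "0 < max p q" "max p q < 1/2"
  using p_pos p_less q_pos q_less by auto

lemma Apq_subset: "Apq p q \<subseteq> {1 - max p q..1}"
proof
  fix z assume "z \<in> Apq p q"
  then obtain u where u: "u \<in> {0..1}" "z = p * u + 1 - p \<or> z = q * u + 1 - q"
    unfolding Apq_def using Kpq_subset_unit by auto
  moreover have "0 \<le> p * u" "p * u \<le> p" "0 \<le> q * u" "q * u \<le> q"
    using u p_pos q_pos by (simp_all add: mult_left_le)
  ultimately show "z \<in> {1 - max p q..1}"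
    unfolding atLeastAtMost_iff using max.cobounded1[of p q] max.cobounded2[of q p]
    by (elim disjE; intro conjI; linarith)
qed

lemma factor_pos: "0 < p ^ a * q ^ b"
  using p_pos q_pos by simp

lemma factor_le_1: "p ^ a * q ^ b \<le> 1"
  using p_pos p_less q_pos q_less by (simp add: mult_le_one power_le_one)

lemma abs_scaled_diff: "\<bar>p ^ a * q ^ b * w - p ^ a * q ^ b * w'\<bar> = p ^ a * q ^ b * \<bar>w - w'\<bar>"
  using p_pos q_pos by (simp add: abs_mult flip: right_diff_distrib)

lemma scaled_le_max:
  assumes "1 \<le> a + b" "0 \<le> z" "z \<le> 1"
  shows "p ^ a * q ^ b * z \<le> max p q"
proof -
  have "p ^ a * q ^ b * z \<le> p ^ a * q ^ b"
    using assms p_pos q_pos by (simp add: mult_left_le)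
  also have "\<dots> \<le> max p q ^ a * max p q ^ b"
    using p_pos q_pos by (simp add: mult_mono power_mono)
  also have "\<dots> \<le> max p q ^ 1"
    unfolding power_add[symmetric] using assms(1) max_less_half
    by (intro power_decreasing) auto
  finally show ?thesis by simp
qed

lemma scaled_Apq_ne:
  assumes "twofold p q" "z \<in> Apq p q" "z' \<in> Apq p q" "1 \<le> a" "1 \<le> d"
  shows "p ^ a * z \<noteq> q ^ d * z'"
proof -
  have "(Smap p q 1 ^^ a) ` Apq p q \<inter> (Smap p q 2 ^^ d) ` Apq p q = {}"
    using assms(1,4,5) unfolding twofold_def by simp
  moreover have "p ^ a * z \<in> (Smap p q 1 ^^ a) ` Apq p q"
    using image_eqI[where f = "Smap p q 1 ^^ a", OF Smap_1_iterate[symmetric] assms(2)] .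
  moreover have "q ^ d * z' \<in> (Smap p q 2 ^^ d) ` Apq p q"
    using image_eqI[where f = "Smap p q 2 ^^ d", OF Smap_2_iterate[symmetric] assms(3)] .
  ultimately show ?thesis by (metis disjoint_iff)
qed

lemma scaled_Apq_eq_imp_exponents_zero:
  assumes tw: "twofold p q" and z: "z \<in> Apq p q" "z' \<in> Apq p q"
    and eq: "p ^ a * q ^ b * z = p ^ c * q ^ d * z'"
    and ac: "a = 0 \<or> c = 0" and bd: "b = 0 \<or> d = 0"
  shows "a + b = 0 \<and> c + d = 0"
proof (rule ccontr)
  have large: "max p q < y" and unit: "0 \<le> y" "y \<le> 1" if "y \<in> Apq p q" for y
    using Apq_subset that max_less_half by fastforce+
  have small: "p ^ a' * q ^ b' * y \<le> max p q" if "a' + b' \<noteq> 0" "y \<in> Apq p q" for a' b' y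
    using scaled_le_max[of a' b' y] unit[OF that(2)] that(1) by simp
  assume "\<not> (a + b = 0 \<and> c + d = 0)"
  moreover have "a + b \<noteq> 0" if "c + d \<noteq> 0"
    using eq small[OF that z(2)] large[OF z(1)] by (cases "a + b = 0") auto
  moreover have "c + d \<noteq> 0" if "a + b \<noteq> 0"
    using eq small[OF that z(1)] large[OF z(2)] by (cases "c + d = 0") auto
  ultimately consider "1 \<le> a" "1 \<le> d" "b = 0" "c = 0" | "1 \<le> b" "1 \<le> c" "a = 0" "d = 0"
    using ac bd by fastforce
  then show False
  proof cases
    case 1
    then show False using scaled_Apq_ne[OF tw z 1(1,2)] eq by simp
  next
    case 2
    then show False using scaled_Apq_ne[OF tw z(2,1) 2(2,1)] eq by simp
  qed
qed

lemma scaled_Apq_exponents_unique: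
  assumes tw: "twofold p q" and z: "z \<in> Apq p q" "z' \<in> Apq p q"
    and eq: "p ^ a * q ^ b * z = p ^ c * q ^ d * z'"
  shows "a = c \<and> b = d"
proof -
  define a0 b0 where "a0 = min a c" and "b0 = min b d"
  have split: "p ^ a = p ^ a0 * p ^ (a - a0)" "p ^ c = p ^ a0 * p ^ (c - a0)"
    "q ^ b = q ^ b0 * q ^ (b - b0)" "q ^ d = q ^ b0 * q ^ (d - b0)"
    unfolding a0_def b0_def by (simp_all flip: power_add)
  have "(p ^ a0 * q ^ b0) * (p ^ (a - a0) * q ^ (b - b0) * z)
      = (p ^ a0 * q ^ b0) * (p ^ (c - a0) * q ^ (d - b0) * z')"
    using eq unfolding split by (simp only: ac_simps)
  then have "p ^ (a - a0) * q ^ (b - b0) * z = p ^ (c - a0) * q ^ (d - b0) * z'"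
    using p_pos q_pos by simp
  moreover have "a - a0 = 0 \<or> c - a0 = 0" "b - b0 = 0 \<or> d - b0 = 0"
    unfolding a0_def b0_def by auto
  ultimately have "a - a0 + (b - b0) = 0 \<and> c - a0 + (d - b0) = 0"
    by (rule scaled_Apq_eq_imp_exponents_zero[OF tw z])
  then show ?thesis unfolding a0_def b0_def by (simp add: min_def split: if_splits)
qed

end

locale pq_pair = src: pq_ifs p q + tgt: pq_ifs p' q' for p q p' q'
begin

definition joint_attractor :: "(real \<times> real) set" where
  "joint_attractor = attractor (\<lambda>i. map_prod (Smap p q i) (Smap p' q' i)) {1..4}"

sublocale joint: contracting_ifs "\<lambda>i. map_prod (Smap p q i) (Smap p' q' i)" "{1..4}"
    "max (max p q) (max p' q')"
  by (rule contracting_ifs_prod[OF src.contracting tgt.contracting])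

lemma fst_joint_attractor: "fst ` joint_attractor = Kpq p q"
  unfolding joint_attractor_def src.Kpq_eq_attractor
  by (rule attractor_conjugate[where \<sigma> = id, OF joint.contracting_ifs_axioms src.contracting])
    (auto intro: continuous_intros)

lemma snd_joint_attractor: "snd ` joint_attractor = Kpq p' q'"
  unfolding joint_attractor_def tgt.Kpq_eq_attractor
  by (rule attractor_conjugate[where \<sigma> = id, OF joint.contracting_ifs_axioms tgt.contracting])
    (auto intro: continuous_intros)

lemma joint_mem_Kpq:
  assumes "(x, y) \<in> joint_attractor"
  shows "x \<in> Kpq p q" "y \<in> Kpq p' q'"
  using fst_joint_attractor snd_joint_attractor assms by force+

lemma joint_mem_unit:
  assumes "(x, y) \<in> joint_attractor"
  shows "0 \<le> x" "x \<le> 1" "0 \<le> y" "y \<le> 1"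
  using joint_mem_Kpq[OF assms] src.Kpq_subset_unit tgt.Kpq_subset_unit by auto

lemma joint_map_mem:
  "(x, y) \<in> joint_attractor \<Longrightarrow> i \<in> {1..4} \<Longrightarrow> (Smap p q i x, Smap p' q' i y) \<in> joint_attractor"
  using joint.map_mem_attractor unfolding joint_attractor_def by fastforce

lemma joint_attractor_cases:
  assumes "(x, y) \<in> joint_attractor"
  obtains i u v where "i \<in> {1..4}" "(u, v) \<in> joint_attractor"
    "x = Smap p q i u" "y = Smap p' q' i v"
  using assms joint.attractor(3) unfolding joint_attractor_def by fastforce

text \<open>The point reflection in the centre of the unit square exchanges the maps with
  indices 1, 3 and 2, 4.\<close>

lemma joint_reflect:
  assumes "(x, y) \<in> joint_attractor"
  shows "(1 - x, 1 - y) \<in> joint_attractor"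
proof -
  define R :: "real \<times> real \<Rightarrow> real \<times> real" where "R = (\<lambda>z. (1 - fst z, 1 - snd z))"
  define \<sigma> :: "nat \<Rightarrow> nat" where "\<sigma> i = (if i \<le> 2 then i + 2 else i - 2)" for i
  have \<sigma>_maps: "\<sigma> i \<in> {1..4}" "\<sigma> (\<sigma> i) = i" if "i \<in> {1..4}" for i
    using that unfolding \<sigma>_def by auto
  have \<sigma>_image: "\<sigma> ` {1..4} = {1..4}"
  proof
    show "\<sigma> ` {1..4} \<subseteq> {1..4}" using \<sigma>_maps(1) by blast
    show "{1..4} \<subseteq> \<sigma> ` {1..4}"
    proof
      fix i :: nat assume "i \<in> {1..4}"
      then show "i \<in> \<sigma> ` {1..4}" using \<sigma>_maps[of i] by (metis image_eqI)
    qed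
  qed
  have conj: "R (map_prod (Smap p q i) (Smap p' q' i) z)
      = map_prod (Smap p q (\<sigma> i)) (Smap p' q' (\<sigma> i)) (R z)" if "i \<in> {1..4}" for i z
  proof -
    obtain a b where "z = (a, b)" by fastforce
    moreover have "i = 1 \<or> i = 2 \<or> i = 3 \<or> i = 4" using that by auto
    ultimately show ?thesis
      unfolding R_def \<sigma>_def by (elim disjE) (simp_all add: Smap_def right_diff_distrib)
  qed
  have "continuous_on UNIV R" unfolding R_def by (intro continuous_intros)
  have "R ` joint_attractor = joint_attractor"
    unfolding joint_attractor_def
    by (rule attractor_conjugate[where \<phi> = R and \<sigma> = \<sigma>])
      (fact joint.contracting_ifs_axioms \<open>continuous_on UNIV R\<close> \<sigma>_image conj)+
  moreover have "(1 - x, 1 - y) \<in> R ` joint_attractor"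
    using assms by (rule image_eqI[rotated]) (simp add: R_def)
  ultimately show ?thesis by simp
qed

definition scaled_from_A :: "real \<Rightarrow> real \<Rightarrow> bool" where
  "scaled_from_A x y \<longleftrightarrow> (\<exists>a b z w. z \<in> Apq p q \<and> (z, w) \<in> joint_attractor \<and>
     x = p ^ a * q ^ b * z \<and> y = p' ^ a * q' ^ b * w)"

lemma scaled_from_A_pos: "scaled_from_A x y \<Longrightarrow> 0 < x"
  unfolding scaled_from_A_def
  using src.Apq_subset src.max_less_half src.factor_pos by (force intro: mult_pos_pos)

lemma scaled_from_A_mult:
  assumes "scaled_from_A x y"
  shows "scaled_from_A (p * x) (p' * y)" "scaled_from_A (q * x) (q' * y)"
proof -
  obtain a b z w where "z \<in> Apq p q" "(z, w) \<in> joint_attractor"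
    "x = p ^ a * q ^ b * z" "y = p' ^ a * q' ^ b * w"
    using assms unfolding scaled_from_A_def by blast
  then show "scaled_from_A (p * x) (p' * y)" "scaled_from_A (q * x) (q' * y)"
    unfolding scaled_from_A_def
    by (intro exI[of _ "Suc a"] exI[of _ b] exI[of _ z] exI[of _ w], simp add: mult_ac,
        intro exI[of _ a] exI[of _ "Suc b"] exI[of _ z] exI[of _ w], simp add: mult_ac)
qed

lemma joint_scaled_from_A_or_small:
  assumes "(x, y) \<in> joint_attractor"
  shows "scaled_from_A x y \<or> (x \<le> max p q ^ n \<and> y \<le> max p' q' ^ n)"
  using assms
proof (induction n arbitrary: x y)
  case 0
  then show ?case using joint_mem_unit by simp
next
  case (Suc n)
  from Suc.prems obtain i u v where i: "i \<in> {1..4}" and uv: "(u, v) \<in> joint_attractor"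
    and xy: "x = Smap p q i u" "y = Smap p' q' i v"
    by (rule joint_attractor_cases)
  have unit: "0 \<le> u" "0 \<le> v" using joint_mem_unit[OF uv] by auto
  have small: "s * u \<le> max p q ^ Suc n \<and> s' * v \<le> max p' q' ^ Suc n"
    if "u \<le> max p q ^ n \<and> v \<le> max p' q' ^ n" "0 \<le> s" "s \<le> max p q" "0 \<le> s'" "s' \<le> max p' q'"
    for s s'
    using that unit by (auto intro: mult_mono)
  consider "i = 1" | "i = 2" | "i = 3 \<or> i = 4" using i by fastforce
  then show ?case
  proof cases
    case 1
    then show ?thesis
      using Suc.IH[OF uv] scaled_from_A_mult(1) small[of p p'] xy src.p_pos tgt.p_pos by auto
  next
    case 2
    then show ?thesis
      using Suc.IH[OF uv] scaled_from_A_mult(2) small[of q q'] xy src.q_pos tgt.q_pos by auto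
  next
    case 3
    then have "x \<in> Apq p q" using xy joint_mem_Kpq(1)[OF uv] unfolding Apq_def by auto
    then have "scaled_from_A x y"
      unfolding scaled_from_A_def using Suc.prems
      by (intro exI[of _ 0] exI[of _ 0] exI[of _ x] exI[of _ y]) simp
    then show ?thesis ..
  qed
qed

lemma joint_scaled_from_A:
  assumes "(x, y) \<in> joint_attractor" "x \<noteq> 0"
  shows "scaled_from_A x y"
proof -
  have "0 < x" using joint_mem_unit[OF assms(1)] assms(2) by simp
  moreover have "max p q < 1" using src.max_less_half(2) by linarith
  ultimately obtain n where "max p q ^ n < x" using real_arch_pow_inv by blast
  then show ?thesis using joint_scaled_from_A_or_small[OF assms(1), of n] by auto
qed

lemma joint_zero:
  assumes "(0, y) \<in> joint_attractor"
  shows "y = 0"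
proof -
  have "y \<le> max p' q' ^ n * 1" for n
    using joint_scaled_from_A_or_small[OF assms, of n] scaled_from_A_pos by auto
  then have "y \<le> 0"
    using tgt.max_less_half by (intro nonpos_if_le_geometric[where B = 1 and c = "max p' q'"]) auto
  then show ?thesis using joint_mem_unit[OF assms] by simp
qed

lemma joint_fibre_scaled_from_A:
  assumes tw: "twofold p q" and xy: "(x, y) \<in> joint_attractor" "(x, y') \<in> joint_attractor"
    and "x \<noteq> 0"
  obtains a b z w w' where "z \<in> Apq p q" "(z, w) \<in> joint_attractor" "(z, w') \<in> joint_attractor"
    "x = p ^ a * q ^ b * z" "y = p' ^ a * q' ^ b * w" "y' = p' ^ a * q' ^ b * w'"
proof -
  obtain a b z w where z: "z \<in> Apq p q" "(z, w) \<in> joint_attractor"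
    and x: "x = p ^ a * q ^ b * z" and y: "y = p' ^ a * q' ^ b * w"
    using joint_scaled_from_A[OF xy(1) \<open>x \<noteq> 0\<close>] unfolding scaled_from_A_def by blast
  obtain c d z' w' where z': "z' \<in> Apq p q" "(z', w') \<in> joint_attractor"
    and x': "x = p ^ c * q ^ d * z'" and y': "y' = p' ^ c * q' ^ d * w'"
    using joint_scaled_from_A[OF xy(2) \<open>x \<noteq> 0\<close>] unfolding scaled_from_A_def by blast
  have "a = c" "b = d"
    using src.scaled_Apq_exponents_unique[OF tw z(1) z'(1), of a b c d] x x' by simp_all
  moreover from this have "z' = z" using x x' src.p_pos src.q_pos by simp
  ultimately show thesis using that z z' x y y' by blast
qed

text \<open>A fibre over x splits, after rescaling, into a fibre over some z in A; the
  reflection moves it to the fibre over 1 - z, which lies left of max p q, and there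
  the rescaling contracts.\<close>

lemma joint_fibre_contract:
  assumes tw: "twofold p q"
    and \<delta>: "\<And>x y y'. (x, y) \<in> joint_attractor \<Longrightarrow> (x, y') \<in> joint_attractor \<Longrightarrow> \<bar>y - y'\<bar> \<le> \<delta>"
    and xy: "(x, y) \<in> joint_attractor" "(x, y') \<in> joint_attractor"
  shows "\<bar>y - y'\<bar> \<le> max p' q' * \<delta>"
proof -
  have "0 \<le> \<delta>" using \<delta>[OF xy(1) xy(1)] by simp
  have near_0: "\<bar>v - v'\<bar> \<le> max p' q' * \<delta>"
    if uv: "(u, v) \<in> joint_attractor" "(u, v') \<in> joint_attractor" and "u \<le> max p q" for u v v'
  proof (cases "u = 0")
    case True
    then have "v = 0" "v' = 0" using joint_zero uv by auto
    then show ?thesis using \<open>0 \<le> \<delta>\<close> tgt.max_less_half by simp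
  next
    case False
    then obtain a b z w w'
      where z: "z \<in> Apq p q" "(z, w) \<in> joint_attractor" "(z, w') \<in> joint_attractor"
      and u: "u = p ^ a * q ^ b * z" and v: "v = p' ^ a * q' ^ b * w" "v' = p' ^ a * q' ^ b * w'"
      by (rule joint_fibre_scaled_from_A[OF tw uv])
    have "max p q < z" using src.Apq_subset z(1) src.max_less_half by fastforce
    then have "1 \<le> a + b" using u \<open>u \<le> max p q\<close> by (cases "a + b = 0") auto
    then have "p' ^ a * q' ^ b \<le> max p' q'" using tgt.scaled_le_max[of a b 1] by simp
    moreover have "\<bar>v - v'\<bar> = p' ^ a * q' ^ b * \<bar>w - w'\<bar>"
      unfolding v by (rule tgt.abs_scaled_diff)
    ultimately show ?thesis
      using \<delta>[OF z(2,3)] tgt.max_less_half by (simp add: mult_mono)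
  qed
  show ?thesis
  proof (cases "x = 0")
    case True
    then show ?thesis using near_0[OF xy] src.max_less_half by simp
  next
    case False
    then obtain a b z w w'
      where z: "z \<in> Apq p q" "(z, w) \<in> joint_attractor" "(z, w') \<in> joint_attractor"
      and y: "y = p' ^ a * q' ^ b * w" "y' = p' ^ a * q' ^ b * w'"
      by (rule joint_fibre_scaled_from_A[OF tw xy])
    have "\<bar>y - y'\<bar> = p' ^ a * q' ^ b * \<bar>w - w'\<bar>"
      unfolding y by (rule tgt.abs_scaled_diff)
    also have "\<dots> \<le> \<bar>w - w'\<bar>"
      using tgt.factor_le_1[of a b] by (simp add: mult_left_le_one_le tgt.factor_pos less_imp_le)
    also have "\<dots> = \<bar>(1 - w) - (1 - w')\<bar>" by simp
    also have "\<dots> \<le> max p' q' * \<delta>"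
      using near_0[OF joint_reflect[OF z(2)] joint_reflect[OF z(3)]] src.Apq_subset z(1) by auto
    finally show ?thesis .
  qed
qed

lemma joint_single_valued:
  assumes "twofold p q" "(x, y) \<in> joint_attractor" "(x, y') \<in> joint_attractor"
  shows "y = y'"
proof -
  have "\<forall>x y y'. (x, y) \<in> joint_attractor \<longrightarrow> (x, y') \<in> joint_attractor \<longrightarrow>
      \<bar>y - y'\<bar> \<le> max p' q' ^ n * 1" for n
  proof (induction n)
    case 0
    show ?case
    proof (intro allI impI)
      fix x y y' assume xy: "(x, y) \<in> joint_attractor" "(x, y') \<in> joint_attractor"
      show "\<bar>y - y'\<bar> \<le> max p' q' ^ 0 * 1"
        using joint_mem_unit(3,4)[OF xy(1)] joint_mem_unit(3,4)[OF xy(2)] by (simp add: abs_le_iff)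
    qed
  next
    case (Suc n)
    then show ?case using joint_fibre_contract[OF assms(1)] by (simp add: mult.assoc)
  qed
  then have "\<bar>y - y'\<bar> \<le> 0"
    using assms tgt.max_less_half
    by (intro nonpos_if_le_geometric[where B = 1 and c = "max p' q'"]) auto
  then show ?thesis by simp
qed

lemma joint_attractor_compact: "compact joint_attractor"
  using joint.attractor(1) unfolding joint_attractor_def .

lemma pq_pair_swapped: "pq_pair p' q' p q"
  unfolding pq_pair_def using src.pq_ifs_axioms tgt.pq_ifs_axioms by blast

lemma swap_joint_attractor: "prod.swap ` joint_attractor = pq_pair.joint_attractor p' q' p q"
proof -
  interpret rev: pq_pair p' q' p q by (rule pq_pair_swapped)
  have conj: "prod.swap (map_prod (Smap p q i) (Smap p' q' i) z)
      = map_prod (Smap p' q' (id i)) (Smap p q (id i)) (prod.swap z)" if "i \<in> {1..4}" for i z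
    by (cases z) simp
  show ?thesis
    unfolding joint_attractor_def rev.joint_attractor_def
    by (rule attractor_conjugate[where \<phi> = prod.swap and \<sigma> = id])
      (fact joint.contracting_ifs_axioms rev.joint.contracting_ifs_axioms continuous_on_swap conj
        | simp)+
qed

definition intertwining :: "(real \<Rightarrow> real) \<Rightarrow> bool" where
  "intertwining f \<longleftrightarrow> (\<forall>x\<in>Kpq p q. \<forall>i\<in>{1..4}. f (Smap p q i x) = Smap p' q' i (f x))"

lemma intertwiningD:
  "intertwining f \<Longrightarrow> x \<in> Kpq p q \<Longrightarrow> i \<in> {1..4} \<Longrightarrow> f (Smap p q i x) = Smap p' q' i (f x)"
  unfolding intertwining_def by blast

lemma intertwining_homeomorphism_exists:
  assumes "twofold p q" "twofold p' q'"
  shows "\<exists>f g. homeomorphism (Kpq p q) (Kpq p' q') f g \<and> intertwining f"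
proof -
  interpret rev: pq_pair p' q' p q by (rule pq_pair_swapped)
  have "x = x'" if "(x, y) \<in> joint_attractor" "(x', y) \<in> joint_attractor" for x x' y
    using rev.joint_single_valued[OF assms(2)] that swap_joint_attractor by force
  then obtain f g where hom: "homeomorphism (fst ` joint_attractor) (snd ` joint_attractor) f g"
    and graph: "\<And>x y. (x, y) \<in> joint_attractor \<Longrightarrow> f x = y"
    using compact_graph_homeomorphism[OF joint_attractor_compact] joint_single_valued[OF assms(1)]
    by metis
  have "f (Smap p q i x) = Smap p' q' i (f x)" if x: "x \<in> Kpq p q" and i: "i \<in> {1..4}" for x i
  proof -
    obtain y where "(x, y) \<in> joint_attractor"
      using x unfolding fst_joint_attractor[symmetric] fst_eq_Domain by blast
    then show ?thesis using graph joint_map_mem i by metis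
  qed
  then show ?thesis
    using hom fst_joint_attractor snd_joint_attractor unfolding intertwining_def by auto
qed

lemma intertwining_scaled:
  assumes conj: "intertwining f"
    and x: "x \<in> Kpq p q"
  shows "f (p ^ a * q ^ b * x) = p' ^ a * q' ^ b * f x"
proof (induction a)
  case 0
  show ?case
  proof (induction b)
    case (Suc b)
    have "q ^ b * x \<in> Kpq p q" using src.scaled_mem_Kpq[OF x, of 0 b] by simp
    from intertwiningD[OF conj this, of 2]
    have "f (Smap p q 2 (q ^ b * x)) = Smap p' q' 2 (f (q ^ b * x))" by simp
    then show ?case using Suc by (simp add: mult.assoc)
  qed simp
next
  case (Suc a)
  have "p ^ a * q ^ b * x \<in> Kpq p q" using src.scaled_mem_Kpq[OF x] .
  from intertwiningD[OF conj this, of 1]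
  have "f (Smap p q 1 (p ^ a * q ^ b * x)) = Smap p' q' 1 (f (p ^ a * q ^ b * x))" by simp
  then show ?case using Suc by (simp add: mult.assoc)
qed

lemma intertwining_fixes:
  assumes conj: "intertwining f"
  shows "f 0 = 0" "f 1 = 1" "f (1 - p) = 1 - p'"
proof -
  have "f 0 = p' * f 0" using intertwiningD[OF conj src.zero_mem_Kpq, of 1] by simp
  then show "f 0 = 0" using tgt.p_less by (simp add: algebra_simps)
  then show "f (1 - p) = 1 - p'" using intertwiningD[OF conj src.zero_mem_Kpq, of 3] by simp
  have "f 1 = p' * f 1 + 1 - p'" using intertwiningD[OF conj src.one_mem_Kpq, of 3] by simp
  then have "(1 - p') * (f 1 - 1) = 0" by (simp add: algebra_simps)
  then show "f 1 = 1" using tgt.p_less by simp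
qed

lemma order_preserving_intertwining_params_eq:
  assumes tw: "twofold p q"
    and conj: "intertwining f"
    and mono: "\<And>x y. x \<in> Kpq p q \<Longrightarrow> y \<in> Kpq p q \<Longrightarrow> x < y \<Longrightarrow> f x < f y"
  shows "p' = p \<and> q' = q"
proof (rule power_order_rigidity)
  show "0 < p" "p < 1" "0 < q" "q < 1" "0 < p'" "p' < 1" "0 < q'" "q' < 1"
    using src.p_pos src.p_less src.q_pos src.q_less tgt.p_pos tgt.p_less tgt.q_pos tgt.q_less
    by auto
  have "1 \<in> Apq p q" unfolding Apq_def using src.one_mem_Kpq by (force intro: image_eqI[of 1])
  then show "a = c" if "p ^ a * q ^ b = p ^ c * q ^ d" for a b c d
    using src.scaled_Apq_exponents_unique[OF tw, of 1 1 a b c d] that by simp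
  have "1 - p \<in> Kpq p q" using src.Smap_mem_Kpq[OF _ src.zero_mem_Kpq, of 3] by simp
  then have points: "p ^ a * q ^ b \<in> Kpq p q" "f (p ^ a * q ^ b) = p' ^ a * q' ^ b"
    "p ^ a * q ^ b * (1 - p) \<in> Kpq p q" "f (p ^ a * q ^ b * (1 - p)) = p' ^ a * q' ^ b * (1 - p')"
    for a b
    using src.scaled_mem_Kpq[OF src.one_mem_Kpq, of a b] src.scaled_mem_Kpq[of "1 - p" a b]
      intertwining_scaled[OF conj src.one_mem_Kpq, of a b]
      intertwining_scaled[OF conj, of "1 - p" a b]
      intertwining_fixes[OF conj]
    by simp_all
  show "p' ^ a * q' ^ b < p' ^ c * q' ^ d" if "p ^ a * q ^ b < p ^ c * q ^ d" for a b c d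
    using mono[OF points(1,1) that] by (simp add: points)
  show "p' ^ a * q' ^ b < p' ^ c * q' ^ d * (1 - p')"
    if "p ^ a * q ^ b < p ^ c * q ^ d * (1 - p)" for a b c d
    using mono[OF points(1,3) that] by (simp add: points)
  show "p' ^ c * q' ^ d * (1 - p') < p' ^ a * q' ^ b"
    if "p ^ c * q ^ d * (1 - p) < p ^ a * q ^ b" for a b c d
    using mono[OF points(3,1) that] by (simp add: points)
qed


lemma extendable_intertwining_params_eq:
  assumes tw: "twofold p q" and conj: "intertwining f"
    and hom: "homeomorphism {0..1} {0..1} h k" and ext: "\<And>x. x \<in> Kpq p q \<Longrightarrow> h x = f x"
  shows "p' = p \<and> q' = q"
proof (rule order_preserving_intertwining_params_eq[OF tw conj])
  fix x y assume xy: "x \<in> Kpq p q" "y \<in> Kpq p q" "x < y"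
  have "h 0 = 0" using ext intertwining_fixes(1)[OF conj] src.zero_mem_Kpq by simp
  moreover have "0 \<le> x" "y \<le> 1" using xy(1,2) src.Kpq_subset_unit by auto
  ultimately have "h x < h y"
    using homeomorphism_unit_interval_strict_mono[OF hom] \<open>x < y\<close> by blast
  then show "f x < f y" using ext xy(1,2) by simp
qed

end

theorem theorem11:
  fixes p q p' q' :: real
  assumes "0 < p" "p < 1/2" "0 < q" "q < 1/2"
      and "0 < p'" "p' < 1/2" "0 < q'" "q' < 1/2"
      and "twofold p q" "twofold p' q'"
  shows "(\<exists>f g. homeomorphism (Kpq p q) (Kpq p' q') f g \<and>
            (\<forall>x\<in>Kpq p q. \<forall>i\<in>{1..4::nat}. f (Smap p q i x) = Smap p' q' i (f x)))
       \<and> ((p, q) \<noteq> (p', q') \<longrightarrow>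
            (\<forall>f g. homeomorphism (Kpq p q) (Kpq p' q') f g \<and>
                   (\<forall>x\<in>Kpq p q. \<forall>i\<in>{1..4::nat}. f (Smap p q i x) = Smap p' q' i (f x))
               \<longrightarrow> \<not> (\<exists>h k. homeomorphism {0..1::real} {0..1} h k \<and>
                            (\<forall>x\<in>Kpq p q. h x = f x))))"
proof -
  interpret pq_pair p q p' q' by unfold_locales (use assms in auto)
  show ?thesis
  proof (intro conjI impI allI notI)
    show "\<exists>f g. homeomorphism (Kpq p q) (Kpq p' q') f g \<and>
        (\<forall>x\<in>Kpq p q. \<forall>i\<in>{1..4}. f (Smap p q i x) = Smap p' q' i (f x))"
      using intertwining_homeomorphism_exists[OF assms(9,10)] unfolding intertwining_def .
  next
    fix f g :: "real \<Rightarrow> real"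
    assume ne: "(p, q) \<noteq> (p', q')"
      and "homeomorphism (Kpq p q) (Kpq p' q') f g \<and>
        (\<forall>x\<in>Kpq p q. \<forall>i\<in>{1..4}. f (Smap p q i x) = Smap p' q' i (f x))"
      and "\<exists>h k. homeomorphism {0..1} {0..1} h k \<and> (\<forall>x\<in>Kpq p q. h x = f x)"
    then obtain h k where "intertwining f" "homeomorphism {0..1} {0..1} h k"
      "\<And>x. x \<in> Kpq p q \<Longrightarrow> h x = f x"
      unfolding intertwining_def by blast
    with ne show False using extendable_intertwining_params_eq[OF assms(9)] by blast
  qed
qed

end
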